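(* Let $e\ge2$ and let $p^r$, $q^s$ be prime powers with $p^r\equiv 1\pmod e$ and $q^s\equiv1\pmod e$ (the cases $p\ne q$ and $p=q$ are both allowed). Let $\eta_r:\mathbb{Z}/e\mathbb{Z}\to\mathbb{C}$ be the Gaussian periods of degree $e$ for $\mathbb{F}_{p^r}$ (with respect to a fixed generator of $\mathbb{F}_{p^r}^\times$) and $\eta'_s$ those for $\mathbb{F}_{q^s}$ (with respect to a fixed generator of $\mathbb{F}_{q^s}^\times$), and let $C$, $C'$ be the corresponding multiplication matrices. Then for every $d\in(\mathbb{Z}/e\mathbb{Z})\setminus\{0\}$ and all $i,j\in\mathbb{Z}/e\mathbb{Z}$, \[ (\eta_r\overset{d}{\ast}\eta'_s)(i)\,(\eta_r\overset{d}{\ast}\eta'_s)(j)=\sum_{k=0}^{e-1}(C\overset{d}{\ast}C')[j-i,k-i]\,(\eta_r\overset{d}{\ast}\eta'_s)(k). \]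
   Context: For a prime power $Q=\ell^m$ ($\ell$ prime) with $Q\equiv1\pmod e$, write $Q=ef+1$, let $\zeta_\ell=e^{2\pi i/\ell}$, $\mathrm{Tr}:\mathbb{F}_Q\to\mathbb{F}_\ell$ the trace, $\beta$ a generator of $\mathbb{F}_Q^\times$. Gaussian periods: $\eta(i)=\sum_{j=0}^{f-1}\zeta_\ell^{\mathrm{Tr}(\beta^{ej+i})}$. Cyclotomic numbers: $\mathrm{Cyc}(i,j)=\#\{(v_1,v_2):0\le v_1,v_2\le f-1,\ 1+\beta^{ev_1+i}=\beta^{ev_2+j}\}$. Let $D_i=1$ if $-1\in\beta^i(\mathbb{F}_Q^\times)^e$ and $0$ otherwise. The multiplication matrix is $[\mathrm{Cyc}(i,j)-D_if]_{0\le i,j\le e-1}$, with indices modulo $e$ and $M[i,j]$ denoting the $(i,j)$ entry. For functions $f,g$ on $\mathbb{Z}/e\mathbb{Z}$, $(f\overset{d}{\ast}g)(i)=\sum_{s=0}^{e-1}f(s)g(ds+i)$; for matrices, $A\overset{d}{\ast}B=\big[\sum_{s,t=0}^{e-1}a_{s,t}b_{ds+i,dt+j}\big]_{0\le i,j\le e-1}$. *)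

theory Defs
  imports Complex_Main "HOL-Algebra.Algebra"
begin

text \<open>Finite fields are HOL-Algebra fields R with finite carrier of size l^m, l prime.
Indices in Z/eZ are represented by integers, always reduced mod e.\<close>

definition ff_trace :: "('a,'b) ring_scheme \<Rightarrow> nat \<Rightarrow> nat \<Rightarrow> 'a \<Rightarrow> 'a" where
  "ff_trace R l m x = (\<Oplus>\<^bsub>R\<^esub> k \<in> {..<m}. x [^]\<^bsub>R\<^esub> (l ^ k))"

definition tr_nat :: "('a,'b) ring_scheme \<Rightarrow> nat \<Rightarrow> nat \<Rightarrow> 'a \<Rightarrow> nat" where
  "tr_nat R l m x = (THE t. t < l \<and> ff_trace R l m x = [t] \<cdot>\<^bsub>R\<^esub> \<one>\<^bsub>R\<^esub>)"

definition is_generator :: "('a,'b) ring_scheme \<Rightarrow> 'a \<Rightarrow> bool" where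
  "is_generator R \<beta> \<longleftrightarrow> \<beta> \<in> carrier R - {\<zero>\<^bsub>R\<^esub>} \<and>
     (\<forall>x \<in> carrier R - {\<zero>\<^bsub>R\<^esub>}. \<exists>k::nat. x = \<beta> [^]\<^bsub>R\<^esub> k)"

definition gauss_period :: "('a,'b) ring_scheme \<Rightarrow> nat \<Rightarrow> nat \<Rightarrow> nat \<Rightarrow> 'a \<Rightarrow> int \<Rightarrow> complex" where
  "gauss_period R l m e \<beta> i =
     (\<Sum>j < (l ^ m - 1) div e.
        exp (2 * pi * \<i> / of_nat l) ^ tr_nat R l m (\<beta> [^]\<^bsub>R\<^esub> (e * j + nat (i mod int e) :: nat)))"

definition cyc :: "('a,'b) ring_scheme \<Rightarrow> nat \<Rightarrow> nat \<Rightarrow> nat \<Rightarrow> 'a \<Rightarrow> int \<Rightarrow> int \<Rightarrow> nat" where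
  "cyc R l m e \<beta> i j = card {(v1, v2). v1 < (l ^ m - 1) div e \<and> v2 < (l ^ m - 1) div e \<and>
      \<one>\<^bsub>R\<^esub> \<oplus>\<^bsub>R\<^esub> \<beta> [^]\<^bsub>R\<^esub> (e * v1 + nat (i mod int e) :: nat)
        = \<beta> [^]\<^bsub>R\<^esub> (e * v2 + nat (j mod int e) :: nat)}"

definition D_ind :: "('a,'b) ring_scheme \<Rightarrow> nat \<Rightarrow> nat \<Rightarrow> nat \<Rightarrow> 'a \<Rightarrow> int \<Rightarrow> int" where
  "D_ind R l m e \<beta> i = (if \<exists>x \<in> carrier R - {\<zero>\<^bsub>R\<^esub>}.
        \<ominus>\<^bsub>R\<^esub> \<one>\<^bsub>R\<^esub> = \<beta> [^]\<^bsub>R\<^esub> (nat (i mod int e)) \<otimes>\<^bsub>R\<^esub> x [^]\<^bsub>R\<^esub> e then 1 else 0)"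

definition mult_matrix :: "('a,'b) ring_scheme \<Rightarrow> nat \<Rightarrow> nat \<Rightarrow> nat \<Rightarrow> 'a \<Rightarrow> int \<Rightarrow> int \<Rightarrow> int" where
  "mult_matrix R l m e \<beta> i j = int (cyc R l m e \<beta> i j) - D_ind R l m e \<beta> i * int ((l ^ m - 1) div e)"

definition dconv :: "nat \<Rightarrow> int \<Rightarrow> (int \<Rightarrow> complex) \<Rightarrow> (int \<Rightarrow> complex) \<Rightarrow> int \<Rightarrow> complex" where
  "dconv e d F G i = (\<Sum>s \<in> {0..<int e}. F s * G (d * s + i))"

definition dconv_mat :: "nat \<Rightarrow> int \<Rightarrow> (int \<Rightarrow> int \<Rightarrow> int) \<Rightarrow> (int \<Rightarrow> int \<Rightarrow> int) \<Rightarrow> int \<Rightarrow> int \<Rightarrow> int" where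
  "dconv_mat e d A B i j = (\<Sum>s \<in> {0..<int e}. \<Sum>t \<in> {0..<int e}.
      A (s mod int e) (t mod int e) * B ((d * s + i) mod int e) ((d * t + j) mod int e))"

end

(*
  The canonical additive character chi(x) = zeta_p ^ Tr(x) turns each Gaussian period into a
  character sum over a cyclotomic class C_i = beta^i (F^x)^e, namely eta(i) = sum of chi over C_i.
  Substituting y = x u in eta(i) eta(j) gives the sum over u in C_(j-i) and x in C_i of
  chi(x (1 + u)); the inner sum is f when u = -1 and otherwise the period of the class of 1 + u
  shifted by i. Sorting the u by the class of 1 + u produces the cyclotomic numbers, and the
  orthogonality relation sum_k eta(k) = -1 absorbs the correction term D_i f: this is the
  multiplication formula eta(i) eta(j) = sum_k C[j-i,k-i] eta(k).

  The identity for d-convolutions is a formal consequence of the multiplication formulas for eta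
  and eta': expand the product of two d-convolutions, apply both formulas, and re-index the finite
  sums over Z/eZ by translations.
*)

theory Submission
  imports Defs
begin

section \<open>Multiplication matrices and d-convolutions\<close>

lemma sum_mod_shift:
  fixes g :: "int \<Rightarrow> 'a::comm_monoid_add"
  assumes "\<And>x. g (x mod int e) = g x"
  shows "(\<Sum>k\<in>{0..<int e}. g k) = (\<Sum>k\<in>{0..<int e}. g (k + c))"
proof -
  have "bij_betw (\<lambda>k. (k + c) mod int e) {0..<int e} {0..<int e}"
    by (rule bij_betwI[where g = "\<lambda>k. (k - c) mod int e"]) (auto simp: mod_simps)
  then have "(\<Sum>k\<in>{0..<int e}. g ((k + c) mod int e)) = (\<Sum>k\<in>{0..<int e}. g k)"
    by (rule sum.reindex_bij_betw)
  then show ?thesis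
    by (simp add: assms)
qed

lemma sum_swap_outer_inner:
  fixes F :: "'a \<Rightarrow> 'b \<Rightarrow> 'c \<Rightarrow> 'd \<Rightarrow> 'z::comm_monoid_add"
  shows "(\<Sum>s\<in>A. \<Sum>t\<in>B. \<Sum>a\<in>C. \<Sum>k\<in>D. F s t a k) = (\<Sum>k\<in>D. \<Sum>t\<in>B. \<Sum>a\<in>C. \<Sum>s\<in>A. F s t a k)"
  by (subst sum.swap, subst (2) sum.swap, subst (3) sum.swap, subst (2) sum.swap, subst sum.swap)
    (rule refl)

definition has_mult_matrix :: "nat \<Rightarrow> (int \<Rightarrow> complex) \<Rightarrow> (int \<Rightarrow> int \<Rightarrow> int) \<Rightarrow> bool" where
  "has_mult_matrix e \<eta> C \<longleftrightarrow>
     (\<forall>i j. \<eta> i * \<eta> j = (\<Sum>k\<in>{0..<int e}. of_int (C (j - i) (k - i)) * \<eta> k))"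

lemma has_mult_matrix_shifted:
  assumes "has_mult_matrix e \<eta> C"
    and \<eta>_mod: "\<And>x. \<eta> (x mod int e) = \<eta> x" and C_mod: "\<And>x y. C (x mod int e) (y mod int e) = C x y"
  shows "\<eta> x * \<eta> y = (\<Sum>k\<in>{0..<int e}. of_int (C (y - x) (k + c - x)) * \<eta> (k + c))"
proof -
  have "C a (k mod int e - x) = C a (k - x)" for a k
    by (metis C_mod mod_diff_left_eq mod_mod_trivial)
  then have "(\<Sum>k\<in>{0..<int e}. of_int (C (y - x) (k - x)) * \<eta> k) =
      (\<Sum>k\<in>{0..<int e}. of_int (C (y - x) (k + c - x)) * \<eta> (k + c))"
    by (intro sum_mod_shift) (simp add: \<eta>_mod)
  with assms(1) show ?thesis
    by (simp add: has_mult_matrix_def)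
qed

context
  fixes e :: nat and d :: int and \<eta> \<eta>' :: "int \<Rightarrow> complex" and C C' :: "int \<Rightarrow> int \<Rightarrow> int"
  assumes \<eta>_mod: "\<And>x. \<eta> (x mod int e) = \<eta> x" and \<eta>'_mod: "\<And>x. \<eta>' (x mod int e) = \<eta>' x"
    and C_mod: "\<And>x y. C (x mod int e) (y mod int e) = C x y"
    and C'_mod: "\<And>x y. C' (x mod int e) (y mod int e) = C' x y"
begin

lemma dconv_shift: "dconv e d \<eta> \<eta>' k = (\<Sum>s\<in>{0..<int e}. \<eta> (c + s) * \<eta>' (d * (c + s) + k))"
proof -
  have "\<eta>' (d * (s mod int e) + k) = \<eta>' (d * s + k)" for s
    by (metis \<eta>'_mod mod_add_left_eq mod_mult_right_eq)
  then show ?thesis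
    unfolding dconv_def by (subst sum_mod_shift[where c = c]) (simp_all add: \<eta>_mod ac_simps)
qed

lemma dconv_mult_dconv:
  "dconv e d \<eta> \<eta>' i * dconv e d \<eta> \<eta>' j =
     (\<Sum>s\<in>{0..<int e}. \<Sum>t\<in>{0..<int e}. (\<eta> s * \<eta> (s + t)) * (\<eta>' (d * s + i) * \<eta>' (d * (s + t) + j)))"
proof -
  have "dconv e d \<eta> \<eta>' i * dconv e d \<eta> \<eta>' j =
      (\<Sum>s\<in>{0..<int e}. \<eta> s * \<eta>' (d * s + i) * dconv e d \<eta> \<eta>' j)"
    unfolding dconv_def by (simp add: sum_distrib_right)
  also have "\<dots> = (\<Sum>s\<in>{0..<int e}. \<eta> s * \<eta>' (d * s + i) *
      (\<Sum>t\<in>{0..<int e}. \<eta> (s + t) * \<eta>' (d * (s + t) + j)))"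
    by (intro sum.cong refl arg_cong2[where f = times] dconv_shift)
  finally show ?thesis
    by (simp add: sum_distrib_left ac_simps)
qed

lemma dconv_mat_eq_sum:
  "dconv_mat e d C C' x y = (\<Sum>t\<in>{0..<int e}. \<Sum>a\<in>{0..<int e}. C t a * C' (d * t + x) (d * a + y))"
  unfolding dconv_mat_def by (intro sum.cong refl) (simp add: C'_mod)

text \<open>The shifts \<open>a \<mapsto> a + s\<close> and \<open>b \<mapsto> k + d (a + s)\<close> leave \<open>s\<close> only in the factor
  that becomes a d-convolution once summed over \<open>s\<close>.\<close>

lemma dconv_summand_expansion:
  assumes "has_mult_matrix e \<eta> C" "has_mult_matrix e \<eta>' C'"
  shows "(\<eta> s * \<eta> (s + t)) * (\<eta>' (d * s + i) * \<eta>' (d * (s + t) + j)) =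
    (\<Sum>a\<in>{0..<int e}. \<Sum>k\<in>{0..<int e}.
       of_int (C t a * C' (d * t + (j - i)) (d * a + (k - i))) * (\<eta> (a + s) * \<eta>' (d * (a + s) + k)))"
proof -
  let ?P = "\<eta>' (d * s + i) * \<eta>' (d * (s + t) + j)"
  have "(\<eta> s * \<eta> (s + t)) * ?P = (\<Sum>a\<in>{0..<int e}. of_int (C t a) * \<eta> (a + s) * ?P)"
    using has_mult_matrix_shifted[of e \<eta> C s "s + t" s, OF assms(1) \<eta>_mod C_mod]
    by (simp add: sum_distrib_right)
  also have "\<dots> = (\<Sum>a\<in>{0..<int e}. of_int (C t a) * \<eta> (a + s) *
      (\<Sum>k\<in>{0..<int e}. of_int (C' (d * t + (j - i)) (d * a + (k - i))) * \<eta>' (d * (a + s) + k)))"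
  proof (intro sum.cong refl arg_cong2[where f = times])
    fix a
    have "d * (s + t) + j - (d * s + i) = d * t + (j - i)"
      and "\<And>k. k + d * (a + s) - (d * s + i) = d * a + (k - i)"
      and "\<And>k. k + d * (a + s) = d * (a + s) + k"
      by (simp_all add: algebra_simps)
    then show "?P = (\<Sum>k\<in>{0..<int e}.
        of_int (C' (d * t + (j - i)) (d * a + (k - i))) * \<eta>' (d * (a + s) + k))"
      using has_mult_matrix_shifted[of e \<eta>' C' "d * s + i" "d * (s + t) + j" "d * (a + s)",
          OF assms(2) \<eta>'_mod C'_mod]
      by (simp only:)
  qed
  also have "\<dots> = (\<Sum>a\<in>{0..<int e}. \<Sum>k\<in>{0..<int e}.
       of_int (C t a * C' (d * t + (j - i)) (d * a + (k - i))) * (\<eta> (a + s) * \<eta>' (d * (a + s) + k)))"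
    by (simp add: sum_distrib_left mult_ac)
  finally show ?thesis .
qed

lemma has_mult_matrix_dconv:
  assumes "has_mult_matrix e \<eta> C" "has_mult_matrix e \<eta>' C'"
  shows "has_mult_matrix e (dconv e d \<eta> \<eta>') (dconv_mat e d C C')"
  unfolding has_mult_matrix_def
proof (intro allI)
  fix i j
  let ?I = "{0..<int e}"
  let ?c = "\<lambda>k t a. of_int (C t a * C' (d * t + (j - i)) (d * a + (k - i))) :: complex"
  have "dconv e d \<eta> \<eta>' i * dconv e d \<eta> \<eta>' j =
      (\<Sum>s\<in>?I. \<Sum>t\<in>?I. \<Sum>a\<in>?I. \<Sum>k\<in>?I. ?c k t a * (\<eta> (a + s) * \<eta>' (d * (a + s) + k)))"
    by (simp only: dconv_mult_dconv dconv_summand_expansion[OF assms])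
  also have "\<dots> = (\<Sum>k\<in>?I. \<Sum>t\<in>?I. \<Sum>a\<in>?I. ?c k t a * (\<Sum>s\<in>?I. \<eta> (a + s) * \<eta>' (d * (a + s) + k)))"
    by (subst sum_swap_outer_inner) (simp only: sum_distrib_left)
  also have "\<dots> = (\<Sum>k\<in>?I. (\<Sum>t\<in>?I. \<Sum>a\<in>?I. ?c k t a) * dconv e d \<eta> \<eta>' k)"
    by (simp only: dconv_shift[symmetric] sum_distrib_right)
  also have "\<dots> = (\<Sum>k\<in>?I. of_int (dconv_mat e d C C' (j - i) (k - i)) * dconv e d \<eta> \<eta>' k)"
    by (simp only: dconv_mat_eq_sum of_int_sum)
  finally show "dconv e d \<eta> \<eta>' i * dconv e d \<eta> \<eta>' j =
      (\<Sum>k\<in>?I. of_int (dconv_mat e d C C' (j - i) (k - i)) * dconv e d \<eta> \<eta>' k)" .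
qed

end

section \<open>The Frobenius map in characteristic p\<close>

lemma (in abelian_monoid) finsum_atMost_shift:
  assumes "g \<in> UNIV \<rightarrow> carrier G"
  shows "(\<Oplus>k\<in>{..n}. g (Suc k)) \<oplus> g 0 = g (Suc n) \<oplus> (\<Oplus>k\<in>{..n}. g k)"
proof -
  have "(\<Oplus>k\<in>{..n}. g (Suc k)) \<oplus> g 0 = (\<Oplus>k\<in>{..Suc n}. g k)"
    using assms by (intro finsum_Suc2[symmetric]) auto
  also have "\<dots> = g (Suc n) \<oplus> (\<Oplus>k\<in>{..n}. g k)"
    using assms by (intro finsum_Suc) auto
  finally show ?thesis .
qed

lemma (in cring) binomial_expansion:
  assumes x: "x \<in> carrier R" and y: "y \<in> carrier R"
  shows "(x \<oplus> y) [^] n = (\<Oplus>k\<in>{..n}. add_pow R (n choose k) (x [^] k \<otimes> y [^] (n - k)))"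
proof (induction n)
  case 0
  then show ?case using x y by simp
next
  case (Suc n)
  define A where "A k = add_pow R (n choose k) (x [^] Suc k \<otimes> y [^] (n - k))" for k
  define B where "B k = add_pow R (n choose k) (x [^] k \<otimes> y [^] (Suc n - k))" for k
  have [simp]: "A k \<in> carrier R" "B k \<in> carrier R" for k
    using x y by (simp_all add: A_def B_def)
  define T where "T k = add_pow R (Suc n choose k) (x [^] k \<otimes> y [^] (Suc n - k))" for k
  have B_Suc: "B (Suc n) = \<zero>"
    by (simp add: B_def binomial_eq_0)
  have "(x \<oplus> y) [^] Suc n = x \<otimes> (x \<oplus> y) [^] n \<oplus> y \<otimes> (x \<oplus> y) [^] n"
    using x y by (simp add: l_distr m_comm)
  also have "x \<otimes> (x \<oplus> y) [^] n = (\<Oplus>k\<in>{..n}. A k)"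
    unfolding Suc using x y
    by (simp add: finsum_rdistr A_def add_pow_rdistr m_assoc[symmetric] m_comm[of x])
  also have "y \<otimes> (x \<oplus> y) [^] n = (\<Oplus>k\<in>{..n}. B k)"
    unfolding Suc using x y
    by (auto simp add: finsum_rdistr B_def add_pow_rdistr m_ac Suc_diff_le
        intro!: finsum_cong')
  also have "(\<Oplus>k\<in>{..n}. B k) = (\<Oplus>k\<in>{..n}. B (Suc k)) \<oplus> B 0"
    using finsum_atMost_shift[of B n] B_Suc by (simp add: Pi_def finsum_closed)
  also have "(\<Oplus>k\<in>{..n}. A k) \<oplus> ((\<Oplus>k\<in>{..n}. B (Suc k)) \<oplus> B 0) =
      (\<Oplus>k\<in>{..n}. A k \<oplus> B (Suc k)) \<oplus> B 0"
    by (simp add: finsum_addf a_assoc finsum_closed)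
  also have "(\<Oplus>k\<in>{..n}. A k \<oplus> B (Suc k)) = (\<Oplus>k\<in>{..n}. T (Suc k))"
    using x y by (intro finsum_cong') (simp_all add: A_def B_def T_def add.nat_pow_mult)
  also have "(\<Oplus>k\<in>{..n}. T (Suc k)) \<oplus> B 0 = (\<Oplus>k\<in>{..Suc n}. T k)"
  proof -
    have "B 0 = T 0"
      by (simp add: B_def T_def)
    moreover have "(\<Oplus>k\<in>{..Suc n}. T k) = (\<Oplus>k\<in>{..n}. T (Suc k)) \<oplus> T 0"
      using x y by (intro finsum_Suc2) (simp add: T_def)
    ultimately show ?thesis
      by (simp only:)
  qed
  finally show ?case
    by (simp only: T_def)
qed

lemma (in cring) frobenius_add:
  fixes p :: nat
  assumes p: "Factorial_Ring.prime p" and char: "add_pow R p \<one> = \<zero>"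
    and x: "x \<in> carrier R" and y: "y \<in> carrier R"
  shows "(x \<oplus> y) [^] p = x [^] p \<oplus> y [^] p"
proof -
  define T where "T k = add_pow R (p choose k) (x [^] k \<otimes> y [^] (p - k))" for k
  have T_carrier: "T \<in> {..p} \<rightarrow> carrier R"
    using x y by (simp add: T_def)
  have "T k = \<zero>" if "0 < k" "k < p" for k
  proof -
    have "p dvd p choose k"
      using dvd_choose_prime[of k p] that p by simp
    then obtain m where "p choose k = p * m" ..
    then have "add_pow R (p choose k) \<one> = \<zero>"
      by (simp add: add.nat_pow_pow[symmetric] char)
    moreover have "T k = add_pow R (p choose k) \<one> \<otimes> (x [^] k \<otimes> y [^] (p - k))"
      using x y add_pow_ldistr[of \<one> "x [^] k \<otimes> y [^] (p - k)" "p choose k"] by (simp add: T_def)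
    ultimately show ?thesis
      using x y by simp
  qed
  then have "(\<Oplus>k\<in>{..p}. T k) = (\<Oplus>k\<in>{0, p}. T k)"
    using T_carrier prime_gt_0_nat[OF p]
    by (intro add.finprod_mono_neutral_cong_right) (auto simp: not_less_iff_gr_or_eq)
  also have "\<dots> = y [^] p \<oplus> x [^] p"
    using x y prime_gt_0_nat[OF p] by (simp add: T_def finsum_insert)
  finally show ?thesis
    using x y by (simp add: binomial_expansion T_def a_comm)
qed

lemma (in cring) frobenius_iterate_add:
  fixes p :: nat
  assumes "Factorial_Ring.prime p" "add_pow R p \<one> = \<zero>" "x \<in> carrier R" "y \<in> carrier R"
  shows "(x \<oplus> y) [^] (p ^ k) = x [^] (p ^ k) \<oplus> y [^] (p ^ k)"
  using assms(3,4)
proof (induction k arbitrary: x y)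
  case (Suc k)
  then show ?case
    using assms(1,2) by (simp add: nat_pow_pow[symmetric] frobenius_add)
qed simp

lemma (in cring) frobenius_iterate_ring_hom:
  fixes p :: nat
  assumes "Factorial_Ring.prime p" "add_pow R p \<one> = \<zero>"
  shows "(\<lambda>x. x [^] (p ^ k)) \<in> ring_hom R R"
  using assms by (intro ring_hom_memI) (simp_all add: nat_pow_distrib frobenius_iterate_add)

lemma (in domain) nat_pow_eq_zero_iff:
  assumes "x \<in> carrier R"
  shows "x [^] (n::nat) = \<zero> \<longleftrightarrow> x = \<zero> \<and> 0 < n"
  using assms by (induction n) (auto simp: integral_iff)

lemma (in cring) add_pow_one_power:
  fixes m k :: nat
  shows "add_pow R (m ^ k) \<one> = (add_pow R m \<one>) [^] k"
proof (induction k)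
  case (Suc k)
  have "add_pow R (m ^ Suc k) \<one> = add_pow R m (add_pow R (m ^ k) \<one>)"
    using add.nat_pow_pow[of \<one> m "m ^ k"] by (simp add: mult.commute)
  also have "\<dots> = add_pow R m \<one> \<otimes> add_pow R (m ^ k) \<one>"
    using add_pow_ldistr[of \<one> "add_pow R (m ^ k) \<one>" m] by simp
  finally show ?case
    by (simp add: Suc m_comm)
qed simp

lemma (in ring) add_pow_one_mod:
  fixes p n :: nat
  assumes "add_pow R p \<one> = \<zero>"
  shows "add_pow R n \<one> = add_pow R (n mod p) \<one>"
proof -
  have "add_pow R (p * (n div p)) \<one> = \<zero>"
    using assms add.nat_pow_pow[of \<one> "n div p" p] by simp
  then show ?thesis
    using add.nat_pow_mult[of \<one> "p * (n div p)" "n mod p"] by simp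
qed

lemma (in domain) add_pow_one_eq_zero_iff:
  fixes p n :: nat
  assumes p: "Factorial_Ring.prime p" and char: "add_pow R p \<one> = \<zero>"
  shows "add_pow R n \<one> = \<zero> \<longleftrightarrow> p dvd n"
proof
  assume n: "add_pow R n \<one> = \<zero>"
  show "p dvd n"
  proof (rule ccontr)
    assume not_dvd: "\<not> p dvd n"
    then have "coprime n p"
      using p prime_imp_coprime coprime_commute by blast
    moreover have "n \<noteq> 0"
      using not_dvd by (metis dvd_0_right)
    ultimately have "gcd n p = 1" "n \<noteq> 0"
      by simp_all
    then obtain u v where uv: "n * u = p * v + 1"
      using bezout_nat[of n p] by auto
    have "add_pow R (n * u) \<one> = \<zero>"
      using n add.nat_pow_pow[of \<one> u n] by simp
    moreover have "(p * v + 1) mod p = 1"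
      using prime_gt_1_nat[OF p] by (simp add: mod_Suc)
    then have "add_pow R (p * v + 1) \<one> = \<one>"
      using add_pow_one_mod[OF char, of "p * v + 1"] by simp
    ultimately show False
      using uv by simp
  qed
next
  assume "p dvd n"
  then show "add_pow R n \<one> = \<zero>"
    using add_pow_one_mod[OF char, of n] by simp
qed

lemma (in domain) add_pow_one_inj_on:
  fixes p :: nat
  assumes p: "Factorial_Ring.prime p" and char: "add_pow R p \<one> = \<zero>"
  shows "inj_on (\<lambda>t. add_pow R t \<one>) {..<p}"
proof (rule linorder_inj_onI', rule notI)
  fix a b assume ab: "a < b" "b \<in> {..<p}" and eq: "add_pow R a \<one> = add_pow R b \<one>"
  have "add_pow R b \<one> = add_pow R a \<one> \<oplus> add_pow R (b - a) \<one>"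
    using ab by (simp add: add.nat_pow_mult)
  then have "add_pow R (b - a) \<one> = \<zero>"
    using eq by (metis add.l_cancel_one' add.nat_pow_closed one_closed)
  then have "p dvd b - a"
    using add_pow_one_eq_zero_iff[OF p char] by simp
  with ab show False
    by (auto dest: dvd_imp_le)
qed

lemma (in domain) frobenius_fixes_prime_field:
  fixes p :: nat
  assumes p: "Factorial_Ring.prime p" and char: "add_pow R p \<one> = \<zero>"
  shows "(add_pow R (t::nat) \<one>) [^] p = add_pow R t \<one>"
proof (induction t)
  case 0
  then show ?case
    using prime_gt_0_nat[OF p] by (simp add: nat_pow_zero)
next
  case (Suc t)
  then show ?case
    using frobenius_add[OF p char] by (simp add: add.nat_pow_Suc)
qed

lemma (in domain) frobenius_fixed_points:
  fixes p :: nat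
  assumes fin: "finite (carrier R)" and p: "Factorial_Ring.prime p" and char: "add_pow R p \<one> = \<zero>"
  shows "{y \<in> carrier R. y [^] p = y} = (\<lambda>t. add_pow R t \<one>) ` {..<p}"
proof (rule card_seteq[symmetric])
  show "finite {y \<in> carrier R. y [^] p = y}"
    using fin by simp
  show "(\<lambda>t. add_pow R t \<one>) ` {..<p} \<subseteq> {y \<in> carrier R. y [^] p = y}"
    using frobenius_fixes_prime_field[OF p char] by auto
  have "y [^] (p - 1) = \<one>" if "y \<in> carrier R" "y [^] p = y" "y \<noteq> \<zero>" for y
  proof -
    have "y [^] (p - 1) \<otimes> y = \<one> \<otimes> y"
      using that p by (simp add: nat_pow_Suc[symmetric] prime_gt_0_nat del: nat_pow_Suc)
    then show ?thesis
      using that by (simp add: m_rcancel[symmetric])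
  qed
  then have "{y \<in> carrier R. y [^] p = y} \<subseteq> insert \<zero> {y \<in> carrier R. y [^] (p - 1) = \<one>}"
    by auto
  then have "card {y \<in> carrier R. y [^] p = y} \<le> card (insert \<zero> {y \<in> carrier R. y [^] (p - 1) = \<one>})"
    using fin by (intro card_mono) auto
  also have "\<dots> \<le> Suc (card {y \<in> carrier R. y [^] (p - 1) = \<one>})"
    using fin by (simp add: card_insert_if)
  also have "\<dots> \<le> p"
    using num_roots_le_deg[OF fin, of "p - 1"] prime_gt_1_nat[OF p] by simp
  also have "p = card ((\<lambda>t. add_pow R t \<one>) ` {..<p})"
    using card_image[OF add_pow_one_inj_on[OF p char]] by simp
  finally show "card {y \<in> carrier R. y [^] p = y} \<le> card ((\<lambda>t. add_pow R t \<one>) ` {..<p})" .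
qed

section \<open>Trace and additive character of a finite field\<close>

lemma exp_two_pi_div_power_eq_1_iff:
  assumes "0 < n"
  shows "exp (2 * pi * \<i> / of_nat n) ^ k = 1 \<longleftrightarrow> n dvd k"
proof -
  have pow: "exp (2 * pi * \<i> / of_nat n) ^ k = cis (2 * pi * real k / real n)"
    by (simp add: exp_of_nat_mult[symmetric] cis_conv_exp mult_ac)
  show ?thesis
  proof
    assume "exp (2 * pi * \<i> / of_nat n) ^ k = 1"
    then have "cos (2 * pi * real k / real n) = 1"
      unfolding pow by (simp add: complex_eq_iff)
    then obtain m :: int where "2 * pi * real k / real n = of_int m * 2 * pi"
      using cos_one_2pi_int by blast
    then have "real k = of_int m * real n"
      using assms by (simp add: field_simps)
    then have "int k = m * int n"
      by (metis of_int_eq_iff of_int_mult of_int_of_nat_eq)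
    then show "n dvd k"
      by (metis dvd_triv_right int_dvd_int_iff)
  next
    assume "n dvd k"
    then obtain m where "k = n * m" ..
    then have "2 * pi * real k / real n = 2 * pi * real m"
      using assms by simp
    then show "exp (2 * pi * \<i> / of_nat n) ^ k = 1"
      unfolding pow by (simp add: cis_multiple_2pi)
  qed
qed

lemma (in UP_domain) trace_polynomial_exists:
  fixes p :: nat
  assumes "1 < p"
  shows "\<exists>f \<in> carrier P. deg R f = p ^ k \<and>
    (\<forall>x \<in> carrier R. UnivPoly.eval R R id x f = (\<Oplus>j\<in>{..k}. x [^] (p ^ j)))"
proof (induction k)
  case 0
  show ?case
  proof (rule bexI[of _ "UnivPoly.monom P \<one> 1"], intro conjI ballI)
    fix x assume "x \<in> carrier R"
    then show "UnivPoly.eval R R id x (UnivPoly.monom P \<one> 1) = (\<Oplus>j\<in>{..0::nat}. x [^] (p ^ j))"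
      by (simp add: evalRR_monom)
  qed simp_all
next
  case (Suc k)
  then obtain f where f: "f \<in> carrier P" "deg R f = p ^ k"
    and ev: "\<forall>x \<in> carrier R. UnivPoly.eval R R id x f = (\<Oplus>j\<in>{..k}. x [^] (p ^ j))"
    by blast
  let ?g = "f \<oplus>\<^bsub>P\<^esub> UnivPoly.monom P \<one> (p ^ Suc k)"
  have "deg R ?g = p ^ Suc k"
    using f assms by (simp add: deg_add_eq)
  moreover have "UnivPoly.eval R R id x ?g = (\<Oplus>j\<in>{..Suc k}. x [^] (p ^ j))" if x: "x \<in> carrier R" for x
  proof -
    have "(\<Oplus>j\<in>{..k}. x [^] (p ^ j)) \<in> carrier R"
      using x by (intro R.finsum_closed) auto
    then show ?thesis
      using f x ev by (simp add: evalRR_add evalRR_monom R.finsum_Suc Pi_def R.a_comm)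
  qed
  moreover have "?g \<in> carrier P"
    using f by simp
  ultimately show ?case
    by blast
qed

locale finite_field = field R for R (structure) +
  fixes p r :: nat
  assumes finite_carrier: "finite (carrier R)" and prime_p: "Factorial_Ring.prime p"
    and card_carrier: "card (carrier R) = p ^ r"
begin

abbreviation Tr :: "'a \<Rightarrow> 'a" where "Tr \<equiv> ff_trace R p r"

lemma p_gt_1: "1 < p"
  using prime_p by (rule prime_gt_1_nat)

lemma r_pos: "0 < r"
proof (rule ccontr)
  assume "\<not> 0 < r"
  then have "card (carrier R) = 1"
    by (simp add: card_carrier)
  moreover have "card {\<zero>, \<one>} \<le> card (carrier R)"
    using finite_carrier by (intro card_mono) auto
  ultimately show False
    by simp
qed

lemma char_p: "add_pow R p \<one> = \<zero>"
proof -
  have "add_pow R (card (carrier R)) \<one> = \<zero>"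
    using add.pow_order_eq_1[of \<one>] finite_carrier by (simp add: order_def)
  then have "(add_pow R p \<one>) [^] r = \<zero>"
    by (simp add: card_carrier add_pow_one_power)
  then show ?thesis
    using nat_pow_eq_zero_iff[of "add_pow R p \<one>" r] by simp
qed

lemma pow_card:
  assumes x: "x \<in> carrier R"
  shows "x [^] (p ^ r) = x"
proof (cases "x = \<zero>")
  case True
  then show ?thesis
    using p_gt_1 by (simp add: nat_pow_zero)
next
  case False
  interpret M: group "Multiplicative_Group.mult_of R"
    by (rule field_mult_group)
  have "x [^] (p ^ r - 1) = \<one>"
    using M.pow_order_eq_1[of x] x False finite_mult_of[OF finite_carrier]
    by (simp add: order_mult_of[OF finite_carrier] order_def card_carrier
        Multiplicative_Group.nat_pow_mult_of)
  moreover have "p ^ r = Suc (p ^ r - 1)"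
    using p_gt_1 by simp
  ultimately show ?thesis
    using x by (metis nat_pow_Suc l_one)
qed

lemma trace_closed: "x \<in> carrier R \<Longrightarrow> Tr x \<in> carrier R"
  unfolding ff_trace_def by (intro finsum_closed) auto

lemma trace_add:
  assumes "x \<in> carrier R" "y \<in> carrier R"
  shows "Tr (x \<oplus> y) = Tr x \<oplus> Tr y"
  unfolding ff_trace_def using assms
  by (simp add: frobenius_iterate_add[OF prime_p char_p] finsum_addf)

lemma trace_zero: "Tr \<zero> = \<zero>"
  unfolding ff_trace_def using p_gt_1 by (simp add: nat_pow_zero)

lemma trace_frobenius:
  assumes x: "x \<in> carrier R"
  shows "Tr x [^] p = Tr x"
proof -
  interpret frobenius: ring_hom_cring R R "\<lambda>x. x [^] p"
    using frobenius_iterate_ring_hom[OF prime_p char_p, of 1] by unfold_locales simp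
  obtain r' where r': "r = Suc r'"
    using r_pos by (cases r) auto
  define g where "g k = x [^] (p ^ k)" for k
  have g_carrier: "g \<in> UNIV \<rightarrow> carrier R"
    using x by (simp add: g_def)
  have "Tr x [^] p = (\<Oplus>k\<in>{..r'}. g (Suc k))"
    using x unfolding ff_trace_def r' lessThan_Suc_atMost
    by (simp add: g_def comp_def nat_pow_pow mult.commute)
  moreover have "(\<Oplus>k\<in>{..r'}. g (Suc k)) \<oplus> g 0 = (\<Oplus>k\<in>{..r'}. g k) \<oplus> g 0"
  proof -
    have "g (Suc r') = g 0"
      using pow_card[OF x] x by (simp add: g_def r')
    then show ?thesis
      using finsum_atMost_shift[OF g_carrier, of r'] g_carrier
      by (simp add: a_comm finsum_closed Pi_def)
  qed
  then have "(\<Oplus>k\<in>{..r'}. g (Suc k)) = (\<Oplus>k\<in>{..r'}. g k)"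
    using g_carrier by (simp add: add.right_cancel finsum_closed Pi_def)
  ultimately show ?thesis
    unfolding ff_trace_def r' lessThan_Suc_atMost by (simp add: g_def)
qed

lemma trace_in_prime_field:
  assumes "x \<in> carrier R"
  shows "\<exists>t<p. Tr x = add_pow R t \<one>"
  using frobenius_fixed_points[OF finite_carrier prime_p char_p] trace_frobenius[OF assms]
    trace_closed[OF assms] by blast

lemma tr_nat_spec:
  assumes "x \<in> carrier R"
  shows "tr_nat R p r x < p" and "Tr x = add_pow R (tr_nat R p r x) \<one>"
proof -
  have "\<exists>!t. t < p \<and> Tr x = add_pow R t \<one>"
    using trace_in_prime_field[OF assms] add_pow_one_inj_on[OF prime_p char_p]
    unfolding inj_on_def by auto
  then have "tr_nat R p r x < p \<and> Tr x = add_pow R (tr_nat R p r x) \<one>"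
    unfolding tr_nat_def by (rule theI')
  then show "tr_nat R p r x < p" and "Tr x = add_pow R (tr_nat R p r x) \<one>"
    by simp_all
qed

lemma tr_nat_eqI:
  assumes "x \<in> carrier R" "t < p" "Tr x = add_pow R t \<one>"
  shows "tr_nat R p r x = t"
  using tr_nat_spec[OF assms(1)] assms(2,3) add_pow_one_inj_on[OF prime_p char_p]
  unfolding inj_on_def by auto

lemma tr_nat_add:
  assumes "x \<in> carrier R" "y \<in> carrier R"
  shows "tr_nat R p r (x \<oplus> y) = (tr_nat R p r x + tr_nat R p r y) mod p"
proof (rule tr_nat_eqI)
  have "Tr (x \<oplus> y) = add_pow R (tr_nat R p r x) \<one> \<oplus> add_pow R (tr_nat R p r y) \<one>"
    using assms by (simp only: trace_add tr_nat_spec(2)[symmetric])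
  then show "Tr (x \<oplus> y) = add_pow R ((tr_nat R p r x + tr_nat R p r y) mod p) \<one>"
    by (simp add: add.nat_pow_mult add_pow_one_mod[OF char_p, symmetric])
qed (use assms p_gt_1 in auto)

lemma tr_nat_zero: "tr_nat R p r \<zero> = 0"
  using p_gt_1 by (intro tr_nat_eqI) (simp_all add: trace_zero)

text \<open>\<open>Tr\<close> is a polynomial function of degree \<open>p ^ (r - 1) < card (carrier R)\<close>,
  so it cannot vanish on all of \<open>R\<close>.\<close>

lemma trace_nonzero: "\<exists>a \<in> carrier R. Tr a \<noteq> \<zero>"
proof (rule ccontr)
  assume all_zero: "\<not> ?thesis"
  interpret UP_domain R "UP R"
    by unfold_locales
  obtain f where f: "f \<in> carrier (UP R)" "deg R f = p ^ (r - 1)"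
    and ev: "\<forall>x \<in> carrier R. UnivPoly.eval R R id x f = (\<Oplus>j\<in>{..r - 1}. x [^] (p ^ j))"
    using trace_polynomial_exists[OF p_gt_1, of "r - 1"] by blast
  have "f \<noteq> \<zero>\<^bsub>UP R\<^esub>"
    using f(2) p_gt_1 deg_nzero_nzero by simp
  moreover have "{a \<in> carrier R. UnivPoly.eval R R id a f = \<zero>} = carrier R"
    using all_zero ev r_pos unfolding ff_trace_def
    by (auto simp: lessThan_Suc_atMost[symmetric] simp del: lessThan_Suc_atMost)
  ultimately have "p ^ r \<le> p ^ (r - 1)"
    using roots_bound[OF f(1) _ finite_carrier] f(2) card_carrier by simp
  then show False
    using p_gt_1 r_pos by (simp add: power_decreasing_iff)
qed

definition add_char :: "'a \<Rightarrow> complex" where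
  "add_char x = exp (2 * pi * \<i> / of_nat p) ^ tr_nat R p r x"

lemma add_char_add:
  assumes "x \<in> carrier R" "y \<in> carrier R"
  shows "add_char (x \<oplus> y) = add_char x * add_char y"
proof -
  let ?\<zeta> = "exp (2 * pi * \<i> / of_nat p)"
  have "?\<zeta> ^ n = ?\<zeta> ^ (n mod p)" for n
  proof -
    have "?\<zeta> ^ n = ?\<zeta> ^ (p * (n div p) + n mod p)"
      by simp
    also have "\<dots> = (?\<zeta> ^ p) ^ (n div p) * ?\<zeta> ^ (n mod p)"
      by (simp only: power_add power_mult)
    finally show ?thesis
      using exp_two_pi_div_power_eq_1_iff[of p p] p_gt_1 by simp
  qed
  then show ?thesis
    unfolding add_char_def using assms by (simp add: tr_nat_add power_add)
qed

lemma add_char_zero: "add_char \<zero> = 1"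
  by (simp add: add_char_def tr_nat_zero)

lemma sum_add_char: "(\<Sum>x\<in>carrier R. add_char x) = 0"
proof -
  obtain a where a: "a \<in> carrier R" "Tr a \<noteq> \<zero>"
    using trace_nonzero by blast
  have "add_char a \<noteq> 1"
    using a tr_nat_spec[OF a(1)] exp_two_pi_div_power_eq_1_iff[of p "tr_nat R p r a"] p_gt_1
    by (auto simp: add_char_def dest: dvd_imp_le)
  have "bij_betw (\<lambda>x. x \<oplus> a) (carrier R) (carrier R)"
    by (rule bij_betwI[where g = "\<lambda>y. y \<ominus> a"]) (use a in \<open>auto simp: a_assoc minus_eq r_neg l_neg\<close>)
  then have "(\<Sum>x\<in>carrier R. add_char x) = (\<Sum>x\<in>carrier R. add_char (x \<oplus> a))"
    by (rule sum.reindex_bij_betw[symmetric])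
  also have "\<dots> = (\<Sum>x\<in>carrier R. add_char x) * add_char a"
    using a by (simp add: add_char_add sum_distrib_right)
  finally have "(\<Sum>x\<in>carrier R. add_char x) * (add_char a - 1) = 0"
    by (simp add: right_diff_distrib)
  then show ?thesis
    using \<open>add_char a \<noteq> 1\<close> by simp
qed

end

section \<open>Cyclotomic classes and Gaussian periods\<close>

locale cyclotomic_classes = finite_field R p r for R (structure) and p r +
  fixes e :: nat and \<beta> :: 'a
  assumes e_pos: "0 < e" and e_dvd: "e dvd p ^ r - 1" and generator: "is_generator R \<beta>"
begin

definition N :: nat where "N = p ^ r - 1"

definition f :: nat where "f = N div e"

lemma N_eq: "N = e * f"
  using e_dvd by (simp add: f_def N_def)

lemma N_pos: "0 < N"
  using one_less_power[OF p_gt_1 r_pos] by (simp add: N_def)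

lemma generator_carrier: "\<beta> \<in> carrier R" "\<beta> \<noteq> \<zero>"
  using generator by (simp_all add: is_generator_def)

lemma generator_closed [simp]: "\<beta> [^] (n::nat) \<in> carrier R"
  using generator_carrier by simp

lemma generator_pow_nonzero [simp]: "\<beta> [^] (n::nat) \<noteq> \<zero>"
  using generator_carrier nat_pow_eq_zero_iff[of \<beta> n] by simp

lemma generator_pow_N: "\<beta> [^] N = \<one>"
proof -
  have "\<beta> [^] N \<otimes> \<beta> = \<beta> [^] Suc N"
    by simp
  also have "Suc N = p ^ r"
    using N_pos by (simp add: N_def)
  also have "\<beta> [^] (p ^ r) = \<one> \<otimes> \<beta>"
    using pow_card generator_carrier by simp
  finally show ?thesis
    using generator_carrier by (simp add: m_rcancel[symmetric])
qed

lemma generator_pow_mod: "\<beta> [^] n = \<beta> [^] (n mod N)"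
proof -
  have "\<beta> [^] n = \<beta> [^] (N * (n div N) + n mod N)"
    by simp
  also have "\<dots> = (\<beta> [^] N) [^] (n div N) \<otimes> \<beta> [^] (n mod N)"
    using generator_carrier by (simp add: nat_pow_pow nat_pow_mult)
  finally show ?thesis
    by (simp add: generator_pow_N)
qed

lemma generator_bij: "bij_betw (\<lambda>n. \<beta> [^] n) {..<N} (carrier R - {\<zero>})"
proof -
  have "(\<lambda>n. \<beta> [^] n) ` {..<N} = carrier R - {\<zero>}"
  proof
    show "carrier R - {\<zero>} \<subseteq> (\<lambda>n. \<beta> [^] n) ` {..<N}"
    proof
      fix x assume "x \<in> carrier R - {\<zero>}"
      then obtain n :: nat where "x = \<beta> [^] n"
        using generator by (auto simp: is_generator_def)
      then show "x \<in> (\<lambda>n. \<beta> [^] n) ` {..<N}"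
        using N_pos generator_pow_mod[of n] by auto
    qed
  qed auto
  moreover have "card (carrier R - {\<zero>}) = card {..<N}"
    using finite_carrier card_carrier by (simp add: card_Diff_singleton N_def)
  ultimately show ?thesis
    by (simp add: bij_betw_def eq_card_imp_inj_on)
qed

lemma generator_pow_eq_iff: "\<beta> [^] a = \<beta> [^] b \<longleftrightarrow> a mod N = b mod N"
  using bij_betw_imp_inj_on[OF generator_bij] N_pos generator_pow_mod[of a] generator_pow_mod[of b]
  by (metis inj_on_eq_iff lessThan_iff mod_less_divisor)

definition dlog :: "'a \<Rightarrow> nat" where
  "dlog x = the_inv_into {..<N} (\<lambda>n. \<beta> [^] n) x"

lemma generator_pow_dlog: "x \<in> carrier R \<Longrightarrow> x \<noteq> \<zero> \<Longrightarrow> \<beta> [^] dlog x = x"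
  unfolding dlog_def by (rule f_the_inv_into_f_bij_betw[OF generator_bij]) simp

lemma dlog_less: "x \<in> carrier R \<Longrightarrow> x \<noteq> \<zero> \<Longrightarrow> dlog x < N"
  using bij_betwE[OF bij_betw_the_inv_into[OF generator_bij]] by (auto simp: dlog_def)

lemma dlog_generator_pow: "dlog (\<beta> [^] n) = n mod N"
proof -
  have "dlog (\<beta> [^] (n mod N)) = n mod N"
    unfolding dlog_def using N_pos
    by (intro the_inv_into_f_f bij_betw_imp_inj_on[OF generator_bij]) simp
  then show ?thesis
    by (simp add: generator_pow_mod[of n])
qed

text \<open>The paper's coset \<open>\<beta>\<^sup>a (F\<^sup>\<times>)\<^sup>e\<close>; see \<open>cyclotomic_class_eq_coset\<close>.\<close>

definition cyclotomic_class :: "int \<Rightarrow> 'a set" where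
  "cyclotomic_class a = {x \<in> carrier R - {\<zero>}. int (dlog x) mod int e = a mod int e}"

lemma cyclotomic_class_subset: "cyclotomic_class a \<subseteq> carrier R - {\<zero>}"
  by (auto simp: cyclotomic_class_def)

lemma generator_pow_mem_class:
  "\<beta> [^] n \<in> cyclotomic_class a \<longleftrightarrow> int n mod int e = a mod int e"
proof -
  have "n mod N mod e = n mod e"
    using N_eq by (simp add: mod_mod_cancel)
  then have "int (n mod N) mod int e = int n mod int e"
    by (metis of_nat_mod)
  then show ?thesis
    by (simp add: cyclotomic_class_def dlog_generator_pow)
qed

lemma cyclotomic_class_mult:
  assumes "x \<in> cyclotomic_class a" "u \<in> cyclotomic_class b"
  shows "x \<otimes> u \<in> cyclotomic_class (a + b)"
proof -
  have "x \<otimes> u = \<beta> [^] dlog x \<otimes> \<beta> [^] dlog u"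
    using assms by (simp add: cyclotomic_class_def generator_pow_dlog)
  then have "x \<otimes> u = \<beta> [^] (dlog x + dlog u)"
    using generator_carrier by (simp add: nat_pow_mult)
  moreover have "int (dlog x + dlog u) mod int e = (a + b) mod int e"
    using mod_add_cong[of "int (dlog x)" "int e" a "int (dlog u)" b] assms
    by (simp add: cyclotomic_class_def)
  ultimately show ?thesis
    by (simp add: generator_pow_mem_class)
qed

lemma cyclotomic_classE:
  assumes x: "x \<in> cyclotomic_class a"
  obtains v where "v < f" "x = \<beta> [^] (e * v + nat (a mod int e))"
proof -
  have "int (dlog x mod e) = a mod int e"
    using x by (simp add: cyclotomic_class_def of_nat_mod)
  then have "dlog x mod e = nat (a mod int e)"
    by (metis nat_int)
  then have "dlog x = e * (dlog x div e) + nat (a mod int e)"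
    using mult_div_mod_eq[of e "dlog x"] by simp
  moreover have "x = \<beta> [^] dlog x"
    using x by (simp add: cyclotomic_class_def generator_pow_dlog)
  ultimately have "x = \<beta> [^] (e * (dlog x div e) + nat (a mod int e))"
    by (simp only:)
  moreover have "dlog x < e * f"
    using x dlog_less N_eq by (auto simp: cyclotomic_class_def)
  then have "dlog x div e < f"
    using e_pos by (simp add: div_less_iff_less_mult mult.commute)
  ultimately show ?thesis
    using that by blast
qed

lemma cyclotomic_class_param:
  "bij_betw (\<lambda>v. \<beta> [^] (e * v + nat (a mod int e))) {..<f} (cyclotomic_class a)"
proof (rule bij_betw_imageI)
  have lt: "e * v + nat (a mod int e) < N" if "v < f" for v
  proof -
    have "e * v + nat (a mod int e) < e * Suc v"
      using e_pos by (simp add: nat_less_iff)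
    also have "\<dots> \<le> N"
      using that N_eq by (simp only: mult_le_mono2 Suc_leI)
    finally show ?thesis .
  qed
  show "inj_on (\<lambda>v. \<beta> [^] (e * v + nat (a mod int e))) {..<f}"
    using lt e_pos by (intro inj_onI) (simp add: generator_pow_eq_iff)
  show "(\<lambda>v. \<beta> [^] (e * v + nat (a mod int e))) ` {..<f} = cyclotomic_class a"
    using e_pos by (auto simp: generator_pow_mem_class elim!: cyclotomic_classE)
qed

lemma card_cyclotomic_class: "card (cyclotomic_class a) = f"
  and finite_cyclotomic_class: "finite (cyclotomic_class a)"
  using bij_betw_same_card[OF cyclotomic_class_param] bij_betw_finite[OF cyclotomic_class_param]
  by simp_all

lemma cyclotomic_class_mult_bij:
  assumes "x \<in> cyclotomic_class a"
  shows "bij_betw (\<lambda>u. x \<otimes> u) (cyclotomic_class b) (cyclotomic_class (a + b))"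
proof -
  have x: "x \<in> carrier R" "x \<noteq> \<zero>"
    using assms cyclotomic_class_subset by auto
  have "inj_on (\<lambda>u. x \<otimes> u) (cyclotomic_class b)"
  proof (rule inj_onI)
    fix u v assume "u \<in> cyclotomic_class b" "v \<in> cyclotomic_class b" "x \<otimes> u = x \<otimes> v"
    then show "u = v"
      using x by (simp add: cyclotomic_class_def m_lcancel)
  qed
  moreover have "(\<lambda>u. x \<otimes> u) ` cyclotomic_class b \<subseteq> cyclotomic_class (a + b)"
    using cyclotomic_class_mult[OF assms] by auto
  ultimately show ?thesis
    by (simp add: bij_betw_def card_subset_eq[OF finite_cyclotomic_class] card_image
        card_cyclotomic_class)
qed

lemma cyclotomic_class_eq_coset:
  "cyclotomic_class a = {\<beta> [^] nat (a mod int e) \<otimes> x [^] e | x. x \<in> carrier R - {\<zero>}}"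
proof (intro equalityI subsetI)
  fix y assume "y \<in> cyclotomic_class a"
  then obtain v where "y = \<beta> [^] (e * v + nat (a mod int e))"
    by (rule cyclotomic_classE)
  moreover have "\<beta> [^] nat (a mod int e) \<otimes> (\<beta> [^] v) [^] e = \<beta> [^] (nat (a mod int e) + v * e)"
    using generator_carrier by (simp add: nat_pow_pow nat_pow_mult)
  ultimately have "y = \<beta> [^] nat (a mod int e) \<otimes> (\<beta> [^] v) [^] e"
    by (metis add.commute mult.commute)
  then show "y \<in> {\<beta> [^] nat (a mod int e) \<otimes> x [^] e | x. x \<in> carrier R - {\<zero>}}"
    by (intro CollectI exI[of _ "\<beta> [^] v"]) simp
next
  fix y assume "y \<in> {\<beta> [^] nat (a mod int e) \<otimes> x [^] e | x. x \<in> carrier R - {\<zero>}}"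
  then obtain x where x: "x \<in> carrier R" "x \<noteq> \<zero>" and y: "y = \<beta> [^] nat (a mod int e) \<otimes> x [^] e"
    by blast
  have "x [^] e = \<beta> [^] (dlog x * e)"
    using generator_pow_dlog[OF x] generator_carrier by (metis nat_pow_pow)
  then have "y = \<beta> [^] (nat (a mod int e) + dlog x * e)"
    using y generator_carrier by (simp add: nat_pow_mult)
  moreover have "int (nat (a mod int e) + dlog x * e) mod int e = a mod int e"
    using e_pos by simp
  ultimately show "y \<in> cyclotomic_class a"
    by (simp add: generator_pow_mem_class)
qed

abbreviation \<eta> :: "int \<Rightarrow> complex" where "\<eta> \<equiv> gauss_period R p r e \<beta>"

lemma gauss_period_mod: "\<eta> (a mod int e) = \<eta> a"
  by (simp add: gauss_period_def)

lemma gauss_period_eq_class_sum: "\<eta> a = (\<Sum>x\<in>cyclotomic_class a. add_char x)"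
proof -
  have "(\<Sum>x\<in>cyclotomic_class a. add_char x) = (\<Sum>v<f. add_char (\<beta> [^] (e * v + nat (a mod int e))))"
    by (rule sum.reindex_bij_betw[OF cyclotomic_class_param, symmetric])
  then show ?thesis
    by (simp add: gauss_period_def add_char_def f_def N_def)
qed

lemma sum_gauss_periods: "(\<Sum>k\<in>{0..<int e}. \<eta> k) = -1"
proof -
  let ?g = "\<lambda>x. int (dlog x) mod int e"
  have "cyclotomic_class k = {x \<in> carrier R - {\<zero>}. ?g x = k}" if "k \<in> {0..<int e}" for k
    using that by (simp add: cyclotomic_class_def)
  then have "(\<Sum>k\<in>{0..<int e}. \<eta> k) = (\<Sum>k\<in>{0..<int e}. \<Sum>x\<in>{x \<in> carrier R - {\<zero>}. ?g x = k}. add_char x)"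
    by (simp add: gauss_period_eq_class_sum)
  also have "\<dots> = (\<Sum>x\<in>carrier R - {\<zero>}. add_char x)"
    using finite_carrier e_pos by (intro sum.group) auto
  also have "\<dots> = (\<Sum>x\<in>carrier R. add_char x) - add_char \<zero>"
    using finite_carrier by (simp add: sum_diff1)
  finally show ?thesis
    by (simp add: sum_add_char add_char_zero)
qed

lemma class_char_sum:
  assumes w: "w \<in> carrier R"
  shows "(\<Sum>x\<in>cyclotomic_class i. add_char (x \<otimes> w)) =
    (if w = \<zero> then of_nat f else \<eta> (int (dlog w) + i))"
proof (cases "w = \<zero>")
  case True
  then show ?thesis
    by (simp add: cyclotomic_class_def add_char_zero card_cyclotomic_class[of i, symmetric])
next
  case False
  then have "w \<in> cyclotomic_class (int (dlog w))"
    using w by (simp add: cyclotomic_class_def)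
  then have "(\<Sum>x\<in>cyclotomic_class i. add_char (w \<otimes> x)) =
      (\<Sum>y\<in>cyclotomic_class (int (dlog w) + i). add_char y)"
    by (rule sum.reindex_bij_betw[OF cyclotomic_class_mult_bij])
  then show ?thesis
    using w False by (simp add: gauss_period_eq_class_sum cyclotomic_class_def m_comm)
qed

lemma gauss_period_product:
  "\<eta> i * \<eta> j = (\<Sum>u\<in>cyclotomic_class (j - i).
     if \<one> \<oplus> u = \<zero> then of_nat f else \<eta> (int (dlog (\<one> \<oplus> u)) + i))"
proof -
  have carrier: "x \<in> carrier R" if "x \<in> cyclotomic_class a" for x a
    using that by (simp add: cyclotomic_class_def)
  have "\<eta> i * \<eta> j = (\<Sum>x\<in>cyclotomic_class i. \<Sum>y\<in>cyclotomic_class j. add_char (x \<oplus> y))"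
    by (simp add: gauss_period_eq_class_sum sum_product add_char_add carrier)
  also have "\<dots> = (\<Sum>x\<in>cyclotomic_class i. \<Sum>u\<in>cyclotomic_class (j - i). add_char (x \<oplus> x \<otimes> u))"
  proof (rule sum.cong[OF refl])
    fix x assume "x \<in> cyclotomic_class i"
    from cyclotomic_class_mult_bij[OF this, of "j - i"]
    show "(\<Sum>y\<in>cyclotomic_class j. add_char (x \<oplus> y)) =
        (\<Sum>u\<in>cyclotomic_class (j - i). add_char (x \<oplus> x \<otimes> u))"
      using sum.reindex_bij_betw[of "\<lambda>u. x \<otimes> u" _ _ "\<lambda>y. add_char (x \<oplus> y)"] by simp
  qed
  also have "\<dots> = (\<Sum>u\<in>cyclotomic_class (j - i). \<Sum>x\<in>cyclotomic_class i. add_char (x \<otimes> (\<one> \<oplus> u)))"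
    by (subst sum.swap) (simp add: carrier r_distr)
  finally show ?thesis
    by (simp add: class_char_sum carrier)
qed

lemma cyc_eq_card: "cyc R p r e \<beta> a b = card {u \<in> cyclotomic_class a. \<one> \<oplus> u \<in> cyclotomic_class b}"
proof -
  let ?\<phi> = "\<lambda>c v. \<beta> [^] (e * v + nat (c mod int e))"
  let ?S = "{v \<in> {..<f} \<times> {..<f}. \<one> \<oplus> ?\<phi> a (fst v) = ?\<phi> b (snd v)}"
  let ?T = "{y \<in> cyclotomic_class a \<times> cyclotomic_class b. \<one> \<oplus> fst y = snd y}"
  have "cyc R p r e \<beta> a b = card ?S"
    unfolding cyc_def f_def N_def by (rule arg_cong[where f = card]) auto
  moreover have "bij_betw (map_prod (?\<phi> a) (?\<phi> b)) ?S ?T"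
    by (intro bij_betw_Collect bij_betw_map_prod cyclotomic_class_param) auto
  then have "card ?S = card ?T"
    by (rule bij_betw_same_card)
  moreover have "?T = (\<lambda>u. (u, \<one> \<oplus> u)) ` {u \<in> cyclotomic_class a. \<one> \<oplus> u \<in> cyclotomic_class b}"
    by auto
  moreover have "card ((\<lambda>u. (u, \<one> \<oplus> u)) ` {u \<in> cyclotomic_class a. \<one> \<oplus> u \<in> cyclotomic_class b}) =
      card {u \<in> cyclotomic_class a. \<one> \<oplus> u \<in> cyclotomic_class b}"
    by (intro card_image inj_onI) simp
  ultimately show ?thesis
    by simp
qed

lemma D_ind_eq: "D_ind R p r e \<beta> a = (if \<ominus> \<one> \<in> cyclotomic_class a then 1 else 0)"
  by (auto simp: D_ind_def cyclotomic_class_eq_coset)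

lemma class_indicator_sum:
  assumes w: "w \<in> carrier R"
  shows "(\<Sum>k\<in>{0..<int e}. if w \<in> cyclotomic_class (k - i) then \<eta> k else 0) =
    (if w = \<zero> then 0 else \<eta> (int (dlog w) + i))"
proof (cases "w = \<zero>")
  case False
  have "w \<in> cyclotomic_class (k - i) \<longleftrightarrow> k = (int (dlog w) + i) mod int e" if "k \<in> {0..<int e}" for k
  proof -
    have "w \<in> cyclotomic_class (k - i) \<longleftrightarrow> (int (dlog w) + i) mod int e = k mod int e"
      using w False by (simp add: cyclotomic_class_def mod_eq_dvd_iff algebra_simps)
    with that show ?thesis
      by auto
  qed
  then have "(\<Sum>k\<in>{0..<int e}. if w \<in> cyclotomic_class (k - i) then \<eta> k else 0) =
      (\<Sum>k\<in>{0..<int e}. if k = (int (dlog w) + i) mod int e then \<eta> k else 0)"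
    by (intro sum.cong) auto
  also have "\<dots> = \<eta> (int (dlog w) + i)"
    using e_pos by (simp add: gauss_period_mod)
  finally show ?thesis
    using False by simp
qed (simp add: cyclotomic_class_def)

lemma sum_cyc_gauss_periods:
  "(\<Sum>k\<in>{0..<int e}. of_nat (cyc R p r e \<beta> a (k - i)) * \<eta> k) =
    (\<Sum>u\<in>cyclotomic_class a. if \<one> \<oplus> u = \<zero> then 0 else \<eta> (int (dlog (\<one> \<oplus> u)) + i))"
proof -
  have "(\<Sum>k\<in>{0..<int e}. of_nat (cyc R p r e \<beta> a (k - i)) * \<eta> k) =
      (\<Sum>k\<in>{0..<int e}. \<Sum>u\<in>cyclotomic_class a. if \<one> \<oplus> u \<in> cyclotomic_class (k - i) then \<eta> k else 0)"
    by (simp add: cyc_eq_card sum.inter_filter[symmetric] finite_cyclotomic_class)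
  also have "\<dots> = (\<Sum>u\<in>cyclotomic_class a. \<Sum>k\<in>{0..<int e}.
      if \<one> \<oplus> u \<in> cyclotomic_class (k - i) then \<eta> k else 0)"
    by (rule sum.swap)
  also have "\<dots> = (\<Sum>u\<in>cyclotomic_class a. if \<one> \<oplus> u = \<zero> then 0 else \<eta> (int (dlog (\<one> \<oplus> u)) + i))"
    by (intro sum.cong refl class_indicator_sum) (simp add: cyclotomic_class_def)
  finally show ?thesis .
qed

lemma D_ind_times_f:
  "of_int (D_ind R p r e \<beta> a) * of_nat f =
    (\<Sum>u\<in>cyclotomic_class a. if \<one> \<oplus> u = \<zero> then of_nat f else 0 :: complex)"
proof -
  have "\<one> \<oplus> u = \<zero> \<longleftrightarrow> u = \<ominus> \<one>" if "u \<in> carrier R" for u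
    using that by (metis a_comm minus_equality one_closed r_neg)
  then have "(\<Sum>u\<in>cyclotomic_class a. if \<one> \<oplus> u = \<zero> then of_nat f else 0 :: complex) =
      (\<Sum>u\<in>cyclotomic_class a. if u = \<ominus> \<one> then of_nat f else 0)"
    by (intro sum.cong) (auto simp: cyclotomic_class_def)
  then show ?thesis
    by (simp add: D_ind_eq finite_cyclotomic_class)
qed

lemma mult_matrix_mod: "mult_matrix R p r e \<beta> (x mod int e) (y mod int e) = mult_matrix R p r e \<beta> x y"
  by (simp add: mult_matrix_def cyc_def D_ind_def)

theorem has_mult_matrix_gauss_periods: "has_mult_matrix e \<eta> (mult_matrix R p r e \<beta>)"
  unfolding has_mult_matrix_def
proof (intro allI)
  fix i j
  let ?A = "cyclotomic_class (j - i)"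
  have "(\<Sum>k\<in>{0..<int e}. of_int (mult_matrix R p r e \<beta> (j - i) (k - i)) * \<eta> k) =
      (\<Sum>k\<in>{0..<int e}. of_nat (cyc R p r e \<beta> (j - i) (k - i)) * \<eta> k)
      - of_int (D_ind R p r e \<beta> (j - i)) * of_nat f * (\<Sum>k\<in>{0..<int e}. \<eta> k)"
    by (simp add: mult_matrix_def f_def N_def sum_subtractf sum_distrib_left algebra_simps)
  also have "\<dots> = (\<Sum>u\<in>?A. if \<one> \<oplus> u = \<zero> then 0 else \<eta> (int (dlog (\<one> \<oplus> u)) + i))
      + (\<Sum>u\<in>?A. if \<one> \<oplus> u = \<zero> then of_nat f else 0)"
    by (simp add: sum_cyc_gauss_periods sum_gauss_periods D_ind_times_f)
  also have "\<dots> = \<eta> i * \<eta> j"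
    by (simp add: gauss_period_product sum.distrib[symmetric] if_distrib cong: if_cong)
  finally show "\<eta> i * \<eta> j = (\<Sum>k\<in>{0..<int e}. of_int (mult_matrix R p r e \<beta> (j - i) (k - i)) * \<eta> k)"
    by simp
qed

end

lemma dvd_diff_1_if_mod_eq_1:
  fixes n e :: nat
  assumes "n mod e = 1"
  shows "e dvd n - 1"
proof -
  have "n = n div e * e + 1"
    using div_mult_mod_eq[of n e] assms by simp
  then show ?thesis
    by (metis add_diff_cancel_right' dvd_triv_right)
qed

lemma cyclotomic_classesI:
  assumes "field R" "finite (carrier R)" "Factorial_Ring.prime p" "card (carrier R) = p ^ r"
    and "2 \<le> e" "p ^ r mod e = 1" "is_generator R \<beta>"
  shows "cyclotomic_classes R p r e \<beta>"
  using assms dvd_diff_1_if_mod_eq_1[of "p ^ r" e]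
  by (simp add: cyclotomic_classes_def cyclotomic_classes_axioms_def finite_field_def
      finite_field_axioms_def)

theorem mainTheorem8:
  fixes R :: "('a,'b) ring_scheme" and R' :: "('c,'d) ring_scheme"
    and e p r q s :: nat and \<beta> :: 'a and \<beta>' :: 'c and d i j :: int
  assumes "e \<ge> 2"
    and "field R" "finite (carrier R)" "Factorial_Ring.prime p" "r \<ge> 1" "card (carrier R) = p ^ r"
    and "p ^ r mod e = 1" "is_generator R \<beta>"
    and "field R'" "finite (carrier R')" "Factorial_Ring.prime q" "s \<ge> 1" "card (carrier R') = q ^ s"
    and "q ^ s mod e = 1" "is_generator R' \<beta>'"
    and "\<not> int e dvd d"
  shows "dconv e d (gauss_period R p r e \<beta>) (gauss_period R' q s e \<beta>') i *
         dconv e d (gauss_period R p r e \<beta>) (gauss_period R' q s e \<beta>') j =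
         (\<Sum>k \<in> {0..<int e}.
            of_int (dconv_mat e d (mult_matrix R p r e \<beta>) (mult_matrix R' q s e \<beta>') (j - i) (k - i)) *
            dconv e d (gauss_period R p r e \<beta>) (gauss_period R' q s e \<beta>') k)"
proof -
  interpret F: cyclotomic_classes R p r e \<beta>
    using assms by (intro cyclotomic_classesI)
  interpret F': cyclotomic_classes R' q s e \<beta>'
    using assms by (intro cyclotomic_classesI)
  have "has_mult_matrix e (dconv e d F.\<eta> F'.\<eta>)
      (dconv_mat e d (mult_matrix R p r e \<beta>) (mult_matrix R' q s e \<beta>'))"
    using F.gauss_period_mod F'.gauss_period_mod F.mult_matrix_mod F'.mult_matrix_mod
    by (intro has_mult_matrix_dconv F.has_mult_matrix_gauss_periods F'.has_mult_matrix_gauss_periods)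
  then show ?thesis
    by (simp add: has_mult_matrix_def)
qed

end
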